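(* Let $k$ be a field of characteristic zero and let ${\boldsymbol\lambda},{\boldsymbol\mu}\in M_n(k)$ be antisymmetric. If there exists $A\in GL_n(\mathbb Z)$ with ${\boldsymbol\mu}=A{\boldsymbol\lambda}A^{\mathrm{tr}}$, then $k_{\boldsymbol\lambda}(x_1,\dots,x_n)\cong k_{\boldsymbol\mu}(x_1,\dots,x_n)$ as Poisson algebras over $k$.
   Context: For antisymmetric ${\boldsymbol\lambda}\in M_n(k)$, $k_{\boldsymbol\lambda}(x_1,\dots,x_n)$ is the rational function field $k(x_1,\dots,x_n)$ with the unique Poisson bracket satisfying $\{x_i,x_j\}=\lambda_{ij}x_ix_j$ for all $i,j$. *)

theory Defs
  imports Main
begin

(* Matrices of size n x n are functions nat => nat => _, only entries i,j < n matter. *)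

definition antisym_mat :: "nat \<Rightarrow> (nat \<Rightarrow> nat \<Rightarrow> 'k::field) \<Rightarrow> bool" where
  "antisym_mat n L \<longleftrightarrow> (\<forall>i<n. \<forall>j<n. L i j = - L j i)"

definition GL_int :: "nat \<Rightarrow> (nat \<Rightarrow> nat \<Rightarrow> int) \<Rightarrow> bool" where
  "GL_int n A \<longleftrightarrow> (\<exists>B::nat \<Rightarrow> nat \<Rightarrow> int.
      (\<forall>i<n. \<forall>j<n. (\<Sum>l<n. A i l * B l j) = (if i = j then 1 else 0)) \<and>
      (\<forall>i<n. \<forall>j<n. (\<Sum>l<n. B i l * A l j) = (if i = j then 1 else 0)))"

definition congr_mat :: "nat \<Rightarrow> (nat \<Rightarrow> nat \<Rightarrow> int) \<Rightarrow> (nat \<Rightarrow> nat \<Rightarrow> 'k::field) \<Rightarrow> nat \<Rightarrow> nat \<Rightarrow> 'k" where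
  "congr_mat n A L i j = (\<Sum>p<n. \<Sum>q<n. of_int (A i p) * L p q * of_int (A j q))"

(* iota : k -> K is a ring homomorphism (making K a k-algebra) *)
definition ring_hom_fun :: "('a::field \<Rightarrow> 'b::field) \<Rightarrow> bool" where
  "ring_hom_fun f \<longleftrightarrow> f 1 = 1 \<and> (\<forall>a b. f (a + b) = f a + f b) \<and> (\<forall>a b. f (a * b) = f a * f b)"

definition subfield_set :: "'a::field set \<Rightarrow> bool" where
  "subfield_set S \<longleftrightarrow> 0 \<in> S \<and> 1 \<in> S \<and> (\<forall>a\<in>S. \<forall>b\<in>S. a + b \<in> S \<and> a * b \<in> S) \<and>
     (\<forall>a\<in>S. - a \<in> S \<and> inverse a \<in> S)"

(* K is the rational function field k(x_1,...,x_n) (variables indexed 0..n-1):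
   x_0..x_{n-1} are algebraically independent over iota(k), and K is generated as a field
   by iota(k) and the x_i. *)
definition is_rat_fun_field :: "nat \<Rightarrow> ('k::field \<Rightarrow> 'a::field) \<Rightarrow> (nat \<Rightarrow> 'a) \<Rightarrow> bool" where
  "is_rat_fun_field n \<iota> x \<longleftrightarrow> ring_hom_fun \<iota> \<and>
     (\<forall>M c. finite M \<longrightarrow> M \<subseteq> {m. \<forall>i\<ge>n. m i = 0} \<longrightarrow>
        (\<Sum>m\<in>M. \<iota> (c m) * (\<Prod>i<n. x i ^ m i)) = 0 \<longrightarrow> (\<forall>m\<in>M. c m = 0)) \<and>
     (\<forall>S. subfield_set S \<longrightarrow> range \<iota> \<subseteq> S \<longrightarrow> x ` {..<n} \<subseteq> S \<longrightarrow> S = UNIV)"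

definition poisson_bracket :: "('k::field \<Rightarrow> 'a::field) \<Rightarrow> ('a \<Rightarrow> 'a \<Rightarrow> 'a) \<Rightarrow> bool" where
  "poisson_bracket \<iota> br \<longleftrightarrow>
     (\<forall>a b c. br (a + b) c = br a c + br b c) \<and>
     (\<forall>a b c. br a (b + c) = br a b + br a c) \<and>
     (\<forall>r a b. br (\<iota> r * a) b = \<iota> r * br a b) \<and>
     (\<forall>r a b. br a (\<iota> r * b) = \<iota> r * br a b) \<and>
     (\<forall>a. br a a = 0) \<and>
     (\<forall>a b. br a b = - br b a) \<and>
     (\<forall>a b c. br a (br b c) + br b (br c a) + br c (br a b) = 0) \<and>
     (\<forall>a b c. br a (b * c) = br a b * c + b * br a c)"

definition is_k_lambda :: "nat \<Rightarrow> (nat \<Rightarrow> nat \<Rightarrow> 'k::field) \<Rightarrow> ('k \<Rightarrow> 'a::field) \<Rightarrow> (nat \<Rightarrow> 'a) \<Rightarrow> ('a \<Rightarrow> 'a \<Rightarrow> 'a) \<Rightarrow> bool" where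
  "is_k_lambda n L \<iota> x br \<longleftrightarrow> is_rat_fun_field n \<iota> x \<and> poisson_bracket \<iota> br \<and>
     (\<forall>i<n. \<forall>j<n. br (x i) (x j) = \<iota> (L i j) * x i * x j)"

definition poisson_iso :: "('k::field \<Rightarrow> 'a::field) \<Rightarrow> ('a \<Rightarrow> 'a \<Rightarrow> 'a) \<Rightarrow> ('k \<Rightarrow> 'b::field) \<Rightarrow> ('b \<Rightarrow> 'b \<Rightarrow> 'b) \<Rightarrow> ('a \<Rightarrow> 'b) \<Rightarrow> bool" where
  "poisson_iso \<iota> br \<iota>' br' f \<longleftrightarrow> bij f \<and> f 1 = 1 \<and>
     (\<forall>a b. f (a + b) = f a + f b) \<and> (\<forall>a b. f (a * b) = f a * f b) \<and>
     (\<forall>r a. f (\<iota> r * a) = \<iota>' r * f a) \<and>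
     (\<forall>a b. f (br a b) = br' (f a) (f b))"

end

theory Submission
  imports Defs
begin

text \<open>
  Let \<open>B = A\<^sup>-\<^sup>1\<close>. The substitution \<open>x\<^sup>e \<mapsto> y\<^sup>e\<^sup>B\<close> of Laurent monomials is invertible on
  exponent vectors, and Laurent monomials are linearly independent in a rational function field;
  hence \<open>P(x)/Q(x) \<mapsto> P(y\<^sup>B)/Q(y\<^sup>B)\<close> is a well-defined isomorphism of fields over \<open>k\<close>.
  For a log-canonical bracket one has \<open>{y\<^sup>u, y\<^sup>v} = (u M v\<^sup>T) y\<^sup>u y\<^sup>v\<close>, so the images of \<open>x\<^sub>i, x\<^sub>j\<close>
  have bracket coefficient \<open>(B M B\<^sup>T)\<^sub>i\<^sub>j = L\<^sub>i\<^sub>j\<close>. Finally, for fixed \<open>a\<close> both \<open>b \<mapsto> f {a, b}\<close> and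
  \<open>b \<mapsto> {f a, f b}\<close> are derivations along \<open>f\<close> vanishing on \<open>k\<close>, so they agree everywhere once
  they agree on the generators.
\<close>

section \<open>Ring homomorphisms between fields\<close>

lemma subfield_setI:
  assumes "0 \<in> S" "1 \<in> S" "\<And>a b. a \<in> S \<Longrightarrow> b \<in> S \<Longrightarrow> a + b \<in> S"
    "\<And>a b. a \<in> S \<Longrightarrow> b \<in> S \<Longrightarrow> a * b \<in> S" "\<And>a. a \<in> S \<Longrightarrow> - a \<in> S"
    "\<And>a. a \<in> S \<Longrightarrow> inverse a \<in> S"
  shows "subfield_set S"
  unfolding subfield_set_def using assms by simp

context
  fixes h :: "'a::field \<Rightarrow> 'b::field"
  assumes hom: "ring_hom_fun h"
begin

lemma ring_hom_fun_one: "h 1 = 1"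
  and ring_hom_fun_add: "h (a + b) = h a + h b"
  and ring_hom_fun_mult: "h (a * b) = h a * h b"
  using hom unfolding ring_hom_fun_def by blast+

lemma ring_hom_fun_zero: "h 0 = 0"
  using ring_hom_fun_add[of 0 0] by (metis add_0 add_cancel_right_right)

lemma ring_hom_fun_uminus: "h (- a) = - h a"
  using ring_hom_fun_add[of a "- a"] by (simp add: ring_hom_fun_zero eq_neg_iff_add_eq_0 add.commute)

lemma ring_hom_fun_diff: "h (a - b) = h a - h b"
  using ring_hom_fun_add[of a "- b"] by (simp add: ring_hom_fun_uminus)

lemma ring_hom_fun_sum: "h (sum g S) = (\<Sum>s\<in>S. h (g s))"
  by (induction S rule: infinite_finite_induct) (auto simp: ring_hom_fun_zero ring_hom_fun_add)

lemma ring_hom_fun_of_int: "h (of_int m) = of_int m"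
proof -
  have of_nat: "h (of_nat k) = of_nat k" for k
    by (induction k) (auto simp: ring_hom_fun_zero ring_hom_fun_add ring_hom_fun_one)
  show ?thesis
    by (cases m rule: int_cases2) (simp_all add: of_nat ring_hom_fun_uminus)
qed

lemma ring_hom_fun_inverse: "h (inverse a) = inverse (h a)"
proof (cases "a = 0")
  case False
  then have "h a * h (inverse a) = 1"
    by (simp flip: ring_hom_fun_mult add: ring_hom_fun_one)
  then show ?thesis by (metis inverse_unique)
qed (simp add: ring_hom_fun_zero)

lemma ring_hom_fun_eq_0_iff: "h a = 0 \<longleftrightarrow> a = 0"
proof
  assume "h a = 0"
  show "a = 0"
  proof (rule ccontr)
    assume "a \<noteq> 0"
    then have "h a * h (inverse a) = 1"
      by (simp flip: ring_hom_fun_mult add: ring_hom_fun_one)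
    with \<open>h a = 0\<close> show False by simp
  qed
qed (simp add: ring_hom_fun_zero)

lemma ring_hom_fun_inj: "inj h"
proof (rule injI)
  fix a b assume "h a = h b"
  then have "h (a - b) = 0" by (simp add: ring_hom_fun_diff)
  then show "a = b" by (simp add: ring_hom_fun_eq_0_iff)
qed

lemma subfield_set_range: "subfield_set (range h)"
proof (rule subfield_setI)
  show "0 \<in> range h" by (metis rangeI ring_hom_fun_zero)
  show "1 \<in> range h" by (metis rangeI ring_hom_fun_one)
  show "a + b \<in> range h" if "a \<in> range h" "b \<in> range h" for a b
    using that by (auto simp flip: ring_hom_fun_add)
  show "a * b \<in> range h" if "a \<in> range h" "b \<in> range h" for a b
    using that by (auto simp flip: ring_hom_fun_mult)
  show "- a \<in> range h" if "a \<in> range h" for a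
    using that by (auto simp flip: ring_hom_fun_uminus)
  show "inverse a \<in> range h" if "a \<in> range h" for a
    using that by (auto simp flip: ring_hom_fun_inverse)
qed

end

lemma ring_hom_fun_id: "ring_hom_fun (\<lambda>a::'a::field. a)"
  by (simp add: ring_hom_fun_def)

lemma rat_fun_field_hom: "is_rat_fun_field n \<iota> x \<Longrightarrow> ring_hom_fun \<iota>"
  unfolding is_rat_fun_field_def by blast

lemma rat_fun_field_generated:
  "is_rat_fun_field n \<iota> x \<Longrightarrow> subfield_set S \<Longrightarrow> range \<iota> \<subseteq> S \<Longrightarrow> x ` {..<n} \<subseteq> S \<Longrightarrow> S = UNIV"
  unfolding is_rat_fun_field_def by blast

lemma rat_fun_field_monomials_independent:
  "is_rat_fun_field n \<iota> x \<Longrightarrow> finite E \<Longrightarrow> E \<subseteq> {m. \<forall>i\<ge>n. m i = 0} \<Longrightarrow>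
    (\<Sum>m\<in>E. \<iota> (c m) * (\<Prod>i<n. x i ^ m i)) = 0 \<Longrightarrow> \<forall>m\<in>E. c m = 0"
  unfolding is_rat_fun_field_def by blast

lemma rat_fun_field_var_nonzero:
  assumes rf: "is_rat_fun_field n \<iota> x" and "i < n"
  shows "x i \<noteq> 0"
proof
  assume "x i = 0"
  let ?e = "\<lambda>j. if j = i then 1 else 0 :: nat"
  have "(\<Prod>j<n. x j ^ ?e j) = x i"
    using \<open>i < n\<close> by (simp add: if_distrib prod.delta cong: if_cong)
  with \<open>x i = 0\<close> have vanish: "(\<Sum>m\<in>{?e}. \<iota> 1 * (\<Prod>j<n. x j ^ m j)) = 0" by simp
  have "\<forall>m\<in>{?e}. (1::'a) = 0"
    by (rule rat_fun_field_monomials_independent[OF rf _ _ vanish]) (use \<open>i < n\<close> in auto)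
  then show False by simp
qed

section \<open>Leibniz rules\<close>

lemma twisted_leibniz_one:
  assumes leibniz: "\<And>a b. D (a * b) = D a * f b + f a * D b" and "f 1 = 1"
  shows "D (1::'a::field) = (0::'b::field)"
  using leibniz[of 1 1] assms(2) by (metis add_cancel_right_right mult_1_left mult_1_right)

lemma twisted_leibniz_inverse:
  fixes D f :: "'a::field \<Rightarrow> 'b::field"
  assumes leibniz: "\<And>a b. D (a * b) = D a * f b + f a * D b"
    and hom: "ring_hom_fun f" and "a \<noteq> 0"
  shows "D (inverse a) = - D a * f (inverse a) / f a"
proof -
  have fa: "f a \<noteq> 0" using hom \<open>a \<noteq> 0\<close> by (simp add: ring_hom_fun_eq_0_iff)
  have "0 = D (a * inverse a)"
    using twisted_leibniz_one[OF leibniz ring_hom_fun_one[OF hom]] \<open>a \<noteq> 0\<close> by simp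
  also have "\<dots> = D a * f (inverse a) + f a * D (inverse a)" by (rule leibniz)
  finally show ?thesis using fa by (simp add: field_simps eq_neg_iff_add_eq_0 add.commute)
qed

context
  fixes D :: "'a::field \<Rightarrow> 'a"
  assumes leibniz: "\<And>a b. D (a * b) = D a * b + a * D b"
begin

lemma leibniz_power: "w \<noteq> 0 \<Longrightarrow> D (w ^ k) = of_nat k * w ^ k * D w / w"
proof (induction k)
  case 0
  show ?case using twisted_leibniz_one[where f = "\<lambda>a. a", OF leibniz] by simp
next
  case (Suc k)
  have "D (w ^ Suc k) = D w * w ^ k + w * D (w ^ k)"
    using leibniz[of w "w ^ k"] by (simp add: mult.commute)
  with Suc show ?case by (simp add: field_simps)
qed

lemma leibniz_power_int:
  assumes "w \<noteq> 0"
  shows "D (w powi k) = of_int k * w powi k * D w / w"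
proof (cases k rule: int_cases2)
  case (nonneg m)
  then show ?thesis using leibniz_power \<open>w \<noteq> 0\<close> by simp
next
  case (nonpos m)
  have "D (w powi k) = D (inverse (w ^ m))" using nonpos by (simp add: power_int_minus)
  also have "\<dots> = - D (w ^ m) * inverse (w ^ m) / w ^ m"
    using twisted_leibniz_inverse[where f = "\<lambda>a. a", OF leibniz ring_hom_fun_id] \<open>w \<noteq> 0\<close> by simp
  finally show ?thesis
    using nonpos leibniz_power \<open>w \<noteq> 0\<close> by (simp add: power_int_minus field_simps)
qed

lemma leibniz_prod:
  "finite S \<Longrightarrow> \<forall>p\<in>S. g p \<noteq> 0 \<Longrightarrow> D (\<Prod>p\<in>S. g p) = (\<Prod>p\<in>S. g p) * (\<Sum>p\<in>S. D (g p) / g p)"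
proof (induction S rule: finite_induct)
  case empty
  show ?case using twisted_leibniz_one[where f = "\<lambda>a. a", OF leibniz] by simp
next
  case (insert a F)
  then show ?case by (simp add: leibniz field_simps)
qed

end

definition derivation_along :: "('k::field \<Rightarrow> 'a::field) \<Rightarrow> ('a \<Rightarrow> 'b::field) \<Rightarrow> ('a \<Rightarrow> 'b) \<Rightarrow> bool" where
  "derivation_along \<iota> f D \<longleftrightarrow> (\<forall>a b. D (a + b) = D a + D b) \<and>
     (\<forall>a b. D (a * b) = D a * f b + f a * D b) \<and> (\<forall>r. D (\<iota> r) = 0)"

context
  fixes \<iota> :: "'k::field \<Rightarrow> 'a::field" and f D :: "'a \<Rightarrow> 'b::field"
  assumes D: "derivation_along \<iota> f D" and f: "ring_hom_fun f"
begin

lemma derivation_along_add: "D (a + b) = D a + D b"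
  and derivation_along_mult: "D (a * b) = D a * f b + f a * D b"
  and derivation_along_const: "D (\<iota> r) = 0"
  using D unfolding derivation_along_def by blast+

lemma derivation_along_zero: "D 0 = 0"
  using derivation_along_add[of 0 0] by (metis add_0 add_cancel_right_right)

lemma derivation_along_one: "D 1 = 0"
  by (rule twisted_leibniz_one[OF derivation_along_mult ring_hom_fun_one[OF f]])

lemma derivation_along_uminus: "D (- a) = - D a"
  using derivation_along_add[of a "- a"]
  by (simp add: derivation_along_zero eq_neg_iff_add_eq_0 add.commute)

lemma derivation_along_inverse: "D (inverse a) = - D a * f (inverse a) / f a"
  by (cases "a = 0")
    (simp_all add: derivation_along_zero twisted_leibniz_inverse[OF derivation_along_mult f])

end

lemma derivations_along_eq:
  assumes rf: "is_rat_fun_field n \<iota> x" and f: "ring_hom_fun f"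
    and D: "derivation_along \<iota> f D" and D': "derivation_along \<iota> f D'"
    and generators: "\<forall>i<n. D (x i) = D' (x i)"
  shows "D = D'"
proof -
  note rules = derivation_along_add derivation_along_mult derivation_along_zero derivation_along_one
    derivation_along_uminus derivation_along_inverse
  have "subfield_set {a. D a = D' a}"
    by (rule subfield_setI) (simp_all add: rules[OF D f] rules[OF D' f])
  moreover have "range \<iota> \<subseteq> {a. D a = D' a}"
    using derivation_along_const[OF D f] derivation_along_const[OF D' f] by auto
  moreover have "x ` {..<n} \<subseteq> {a. D a = D' a}" using generators by auto
  ultimately have "{a. D a = D' a} = UNIV" by (rule rat_fun_field_generated[OF rf])
  then show ?thesis by auto
qed

section \<open>Poisson brackets\<close>

lemma poisson_bracket_add_right: "poisson_bracket \<iota> br \<Longrightarrow> br a (b + c) = br a b + br a c"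
  and poisson_bracket_leibniz: "poisson_bracket \<iota> br \<Longrightarrow> br a (b * c) = br a b * c + b * br a c"
  and poisson_bracket_antisym: "poisson_bracket \<iota> br \<Longrightarrow> br a b = - br b a"
  unfolding poisson_bracket_def by blast+

lemma poisson_bracket_const_right:
  assumes pb: "poisson_bracket \<iota> br" and hom: "ring_hom_fun \<iota>"
  shows "br a (\<iota> r) = 0"
proof -
  have "br a 1 = br a 1 + br a 1" using poisson_bracket_leibniz[OF pb, of a 1 1] by simp
  then have "br a 1 = 0" by (metis add_cancel_right_right)
  moreover have "br a (\<iota> r * 1) = \<iota> r * br a 1" using pb unfolding poisson_bracket_def by blast
  ultimately show ?thesis by simp
qed

lemma derivation_along_bracket_image:
  assumes "poisson_bracket \<iota> br" "ring_hom_fun \<iota>" "ring_hom_fun f"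
  shows "derivation_along \<iota> f (\<lambda>b. f (br a b))"
  using assms(3) by (simp add: derivation_along_def poisson_bracket_add_right[OF assms(1)]
      poisson_bracket_leibniz[OF assms(1)] poisson_bracket_const_right[OF assms(1,2)]
      ring_hom_fun_add ring_hom_fun_mult ring_hom_fun_zero)

lemma derivation_along_bracket_preimage:
  assumes "poisson_bracket \<iota>' br'" "ring_hom_fun \<iota>'" "ring_hom_fun f" "\<And>r. f (\<iota> r) = \<iota>' r"
  shows "derivation_along \<iota> f (\<lambda>b. br' (f a) (f b))"
  using assms(3) by (simp add: derivation_along_def poisson_bracket_add_right[OF assms(1)]
      poisson_bracket_leibniz[OF assms(1)] poisson_bracket_const_right[OF assms(1,2)] assms(4)
      ring_hom_fun_add ring_hom_fun_mult)

lemma poisson_iso_from_generators: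
  assumes rf: "is_rat_fun_field n \<iota> x" and hom': "ring_hom_fun \<iota>'"
    and pb: "poisson_bracket \<iota> br" and pb': "poisson_bracket \<iota>' br'"
    and f: "ring_hom_fun f" "bij f" and f_const: "\<And>r. f (\<iota> r) = \<iota>' r"
    and generators: "\<forall>i<n. \<forall>j<n. f (br (x i) (x j)) = br' (f (x i)) (f (x j))"
  shows "poisson_iso \<iota> br \<iota>' br' f"
proof -
  have hom: "ring_hom_fun \<iota>" by (rule rat_fun_field_hom[OF rf])
  note image = derivation_along_bracket_image[OF pb hom f(1)]
  note preimage = derivation_along_bracket_preimage[OF pb' hom' f(1) f_const]
  have generator_left: "(\<lambda>b. f (br (x i) b)) = (\<lambda>b. br' (f (x i)) (f b))" if "i < n" for i
    by (rule derivations_along_eq[OF rf f(1) image preimage]) (use generators that in blast)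
  have "(\<lambda>b. f (br a b)) = (\<lambda>b. br' (f a) (f b))" for a
  proof (rule derivations_along_eq[OF rf f(1) image preimage], intro allI impI)
    fix j assume "j < n"
    have "f (br a (x j)) = - f (br (x j) a)"
      by (subst poisson_bracket_antisym[OF pb]) (rule ring_hom_fun_uminus[OF f(1)])
    also have "\<dots> = br' (f a) (f (x j))"
      using fun_cong[OF generator_left[OF \<open>j < n\<close>], of a] poisson_bracket_antisym[OF pb', of "f a"]
      by simp
    finally show "f (br a (x j)) = br' (f a) (f (x j))" .
  qed
  then show ?thesis
    using f f_const ring_hom_fun_one[OF f(1)] ring_hom_fun_add[OF f(1)] ring_hom_fun_mult[OF f(1)]
    by (simp add: poisson_iso_def fun_eq_iff)
qed

section \<open>Laurent monomials\<close>

definition unit_vec :: "nat \<Rightarrow> nat \<Rightarrow> int" where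
  "unit_vec i = (\<lambda>j. if j = i then 1 else 0)"

definition laurent_monom :: "nat \<Rightarrow> (nat \<Rightarrow> 'a::field) \<Rightarrow> (nat \<Rightarrow> int) \<Rightarrow> 'a" where
  "laurent_monom n x e = (\<Prod>p<n. x p powi e p)"

lemma laurent_monom_zero [simp]: "laurent_monom n x (\<lambda>_. 0) = 1"
  by (simp add: laurent_monom_def)

lemma laurent_monom_unit_vec: "i < n \<Longrightarrow> laurent_monom n x (unit_vec i) = x i"
  unfolding laurent_monom_def unit_vec_def by (simp add: if_distrib prod.delta cong: if_cong)

lemma laurent_monom_add:
  "\<forall>p<n. x p \<noteq> 0 \<Longrightarrow> laurent_monom n x (\<lambda>p. e p + f p) = laurent_monom n x e * laurent_monom n x f"
  by (simp add: laurent_monom_def power_int_add prod.distrib)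

lemma leibniz_laurent_monom:
  assumes leibniz: "\<And>a b. D (a * b) = D a * b + a * D b" and nz: "\<forall>p<n. x p \<noteq> 0"
  shows "D (laurent_monom n x v) = laurent_monom n x v * (\<Sum>q<n. of_int (v q) * D (x q) / x q)"
proof -
  have "D (laurent_monom n x v) = laurent_monom n x v * (\<Sum>q<n. D (x q powi v q) / x q powi v q)"
    unfolding laurent_monom_def by (rule leibniz_prod[OF leibniz]) (simp_all add: nz)
  also have "\<dots> = laurent_monom n x v * (\<Sum>q<n. of_int (v q) * D (x q) / x q)"
    by (intro arg_cong[where f = "\<lambda>t. _ * t"] sum.cong refl)
      (simp add: leibniz_power_int[OF leibniz] nz)
  finally show ?thesis .
qed

lemma bracket_laurent_monom:
  assumes hom: "ring_hom_fun \<iota>" and pb: "poisson_bracket \<iota> br" and nz: "\<forall>p<n. y p \<noteq> 0"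
    and log_canonical: "\<forall>p<n. \<forall>q<n. br (y p) (y q) = \<iota> (M p q) * y p * y q"
  shows "br (laurent_monom n y u) (laurent_monom n y v) =
    \<iota> (\<Sum>p<n. \<Sum>q<n. of_int (u p) * M p q * of_int (v q)) * laurent_monom n y u * laurent_monom n y v"
proof -
  let ?m = "laurent_monom n y"
  have leibniz_monom: "br c (?m w) = ?m w * (\<Sum>q<n. of_int (w q) * br c (y q) / y q)" for c w
    by (rule leibniz_laurent_monom[where D = "br c"]) (simp_all add: poisson_bracket_leibniz[OF pb] nz)
  have generator: "br (y p) (?m v) = (\<Sum>q<n. of_int (v q) * \<iota> (M p q)) * y p * ?m v" if "p < n" for p
  proof -
    have "br (y p) (?m v) = ?m v * (\<Sum>q<n. of_int (v q) * br (y p) (y q) / y q)"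
      by (rule leibniz_monom)
    also have "\<dots> = ?m v * (\<Sum>q<n. of_int (v q) * (\<iota> (M p q) * y p))"
      by (intro arg_cong[where f = "\<lambda>t. _ * t"] sum.cong refl) (simp add: log_canonical that nz)
    finally show ?thesis by (simp add: sum_distrib_left sum_distrib_right mult_ac)
  qed
  have "br (?m u) (?m v) = - br (?m v) (?m u)" by (rule poisson_bracket_antisym[OF pb])
  also have "\<dots> = - (?m u * (\<Sum>p<n. of_int (u p) * br (?m v) (y p) / y p))"
    by (simp add: leibniz_monom)
  also have "\<dots> = ?m u * (\<Sum>p<n. of_int (u p) * br (y p) (?m v) / y p)"
    by (simp add: poisson_bracket_antisym[OF pb, of "?m v"] sum_negf)
  also have "\<dots> = ?m u * (\<Sum>p<n. of_int (u p) * ((\<Sum>q<n. of_int (v q) * \<iota> (M p q)) * ?m v))"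
    by (intro arg_cong[where f = "\<lambda>t. _ * t"] sum.cong refl) (simp add: generator nz)
  also have "\<dots> = (\<Sum>p<n. \<Sum>q<n. of_int (u p) * \<iota> (M p q) * of_int (v q)) * ?m u * ?m v"
    by (simp add: sum_distrib_left sum_distrib_right mult_ac)
  also have "(\<Sum>p<n. \<Sum>q<n. of_int (u p) * \<iota> (M p q) * of_int (v q)) =
      \<iota> (\<Sum>p<n. \<Sum>q<n. of_int (u p) * M p q * of_int (v q))"
    by (simp add: ring_hom_fun_sum[OF hom] ring_hom_fun_mult[OF hom] ring_hom_fun_of_int[OF hom])
  finally show ?thesis .
qed

section \<open>Laurent polynomials\<close>

type_synonym 'k laurent_poly = "('k \<times> (nat \<Rightarrow> int)) list"

text \<open>Only exponent vectors vanishing from \<open>n\<close> on are compared: vectors differing only there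
  give the same Laurent monomial.\<close>

definition supported :: "nat \<Rightarrow> (nat \<Rightarrow> int) \<Rightarrow> bool" where
  "supported n e \<longleftrightarrow> (\<forall>p\<ge>n. e p = 0)"

lemma supported_unit_vec: "i < n \<Longrightarrow> supported n (unit_vec i)"
  by (simp add: supported_def unit_vec_def)

definition lpoly_supported :: "nat \<Rightarrow> 'k laurent_poly \<Rightarrow> bool" where
  "lpoly_supported n P \<longleftrightarrow> (\<forall>(c, e)\<in>set P. supported n e)"

definition lpoly_eval :: "nat \<Rightarrow> ('k::field \<Rightarrow> 'a::field) \<Rightarrow> (nat \<Rightarrow> 'a) \<Rightarrow> 'k laurent_poly \<Rightarrow> 'a" where
  "lpoly_eval n \<iota> x P = (\<Sum>(c, e)\<leftarrow>P. \<iota> c * laurent_monom n x e)"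

definition lpoly_coeff :: "'k::field laurent_poly \<Rightarrow> (nat \<Rightarrow> int) \<Rightarrow> 'k" where
  "lpoly_coeff P e = (\<Sum>(c, e')\<leftarrow>P. if e' = e then c else 0)"

definition lpoly_mult :: "'k::field laurent_poly \<Rightarrow> 'k laurent_poly \<Rightarrow> 'k laurent_poly" where
  "lpoly_mult P Q = [(c * d, \<lambda>i. e i + f i). (c, e) \<leftarrow> P, (d, f) \<leftarrow> Q]"

definition lpoly_uminus :: "'k::field laurent_poly \<Rightarrow> 'k laurent_poly" where
  "lpoly_uminus P = [(- c, e). (c, e) \<leftarrow> P]"

definition lpoly_map_exps :: "((nat \<Rightarrow> int) \<Rightarrow> (nat \<Rightarrow> int)) \<Rightarrow> 'k laurent_poly \<Rightarrow> 'k laurent_poly" where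
  "lpoly_map_exps T P = [(c, T e). (c, e) \<leftarrow> P]"

lemma lpoly_eval_Nil [simp]: "lpoly_eval n \<iota> x [] = 0"
  and lpoly_eval_Cons [simp]: "lpoly_eval n \<iota> x ((c, e) # P) = \<iota> c * laurent_monom n x e + lpoly_eval n \<iota> x P"
  and lpoly_eval_append: "lpoly_eval n \<iota> x (P @ Q) = lpoly_eval n \<iota> x P + lpoly_eval n \<iota> x Q"
  by (simp_all add: lpoly_eval_def)

lemma lpoly_coeff_Nil [simp]: "lpoly_coeff [] e = 0"
  and lpoly_coeff_Cons [simp]: "lpoly_coeff ((c, e') # P) e = (if e' = e then c else 0) + lpoly_coeff P e"
  by (simp_all add: lpoly_coeff_def)

lemma lpoly_supported_Nil [simp]: "lpoly_supported n []"
  and lpoly_supported_Cons [simp]: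
  "lpoly_supported n ((c, e) # P) \<longleftrightarrow> supported n e \<and> lpoly_supported n P"
  and lpoly_supported_append: "lpoly_supported n (P @ Q) \<longleftrightarrow> lpoly_supported n P \<and> lpoly_supported n Q"
  and lpoly_supported_uminus: "lpoly_supported n (lpoly_uminus P) \<longleftrightarrow> lpoly_supported n P"
  and lpoly_supported_map_exps: "(\<And>e. supported n (T e)) \<Longrightarrow> lpoly_supported n (lpoly_map_exps T P)"
  by (auto simp: lpoly_supported_def lpoly_uminus_def lpoly_map_exps_def)

lemma lpoly_supported_mult:
  "lpoly_supported n P \<Longrightarrow> lpoly_supported n Q \<Longrightarrow> lpoly_supported n (lpoly_mult P Q)"
  unfolding lpoly_supported_def lpoly_mult_def supported_def by fastforce

lemma lpoly_eval_uminus: "ring_hom_fun \<iota> \<Longrightarrow> lpoly_eval n \<iota> x (lpoly_uminus P) = - lpoly_eval n \<iota> x P"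
  by (induction P) (auto simp: lpoly_uminus_def ring_hom_fun_uminus)

lemma lpoly_eval_mult:
  assumes hom: "ring_hom_fun \<iota>" and nz: "\<forall>p<n. x p \<noteq> 0"
  shows "lpoly_eval n \<iota> x (lpoly_mult P Q) = lpoly_eval n \<iota> x P * lpoly_eval n \<iota> x Q"
proof -
  have row: "lpoly_eval n \<iota> x [(c * d, \<lambda>i. e i + f i). (d, f) \<leftarrow> Q] =
      \<iota> c * laurent_monom n x e * lpoly_eval n \<iota> x Q" for c e
    by (induction Q) (auto simp: laurent_monom_add[OF nz] ring_hom_fun_mult[OF hom] algebra_simps)
  show ?thesis
    by (induction P) (auto simp: lpoly_mult_def lpoly_eval_append row distrib_right)
qed

lemma lpoly_map_exps_Nil [simp]: "lpoly_map_exps T [] = []"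
  and lpoly_map_exps_Cons [simp]: "lpoly_map_exps T ((c, e) # P) = (c, T e) # lpoly_map_exps T P"
  by (simp_all add: lpoly_map_exps_def)

lemma lpoly_map_exps_append: "lpoly_map_exps T (P @ Q) = lpoly_map_exps T P @ lpoly_map_exps T Q"
  and lpoly_map_exps_uminus: "lpoly_map_exps T (lpoly_uminus P) = lpoly_uminus (lpoly_map_exps T P)"
  by (simp_all add: lpoly_map_exps_def lpoly_uminus_def split_def)

lemma lpoly_map_exps_mult:
  "(\<And>e f. T (\<lambda>i. e i + f i) = (\<lambda>i. T e i + T f i)) \<Longrightarrow>
    lpoly_map_exps T (lpoly_mult P Q) = lpoly_mult (lpoly_map_exps T P) (lpoly_map_exps T Q)"
  by (induction P) (auto simp: lpoly_map_exps_def lpoly_mult_def)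

lemma lpoly_eval_regroup:
  assumes hom: "ring_hom_fun \<iota>" and "finite E" and "snd ` set P \<subseteq> E"
  shows "lpoly_eval n \<iota> x P = (\<Sum>e\<in>E. \<iota> (lpoly_coeff P e) * laurent_monom n x e)"
  using assms(3)
proof (induction P)
  case Nil
  then show ?case by (simp add: ring_hom_fun_zero[OF hom])
next
  case (Cons a P)
  obtain c e' where a: "a = (c, e')" by fastforce
  with Cons.prems have "e' \<in> E" by auto
  have "\<iota> c * laurent_monom n x e' = (\<Sum>e\<in>E. if e' = e then \<iota> c * laurent_monom n x e else 0)"
    using \<open>e' \<in> E\<close> \<open>finite E\<close> by (simp add: sum.delta)
  moreover have "\<iota> (lpoly_coeff (a # P) e) * laurent_monom n x e =
      (if e' = e then \<iota> c * laurent_monom n x e else 0) + \<iota> (lpoly_coeff P e) * laurent_monom n x e" for e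
    by (simp add: a ring_hom_fun_add[OF hom] ring_hom_fun_zero[OF hom] distrib_right)
  ultimately show ?case
    using Cons a by (simp add: sum.distrib)
qed

lemma laurent_monoms_shift:
  assumes nz: "\<forall>p<n. x p \<noteq> 0" and fin: "finite E" and supp: "\<forall>e\<in>E. supported n e"
  obtains N h where "inj_on h E" and "\<forall>e\<in>E. \<forall>i\<ge>n. h e i = 0"
    and "\<forall>e\<in>E. laurent_monom n x e * laurent_monom n x (\<lambda>_. N) = (\<Prod>i<n. x i ^ h e i)"
proof
  define N where "N = (\<Sum>e\<in>E. \<Sum>p<n. \<bar>e p\<bar>)"
  have bound: "\<bar>e p\<bar> \<le> N" if "e \<in> E" "p < n" for e p
  proof -
    have "\<bar>e p\<bar> \<le> (\<Sum>p<n. \<bar>e p\<bar>)" using that by (intro member_le_sum) auto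
    also have "\<dots> \<le> N" unfolding N_def using that fin by (intro member_le_sum) auto
    finally show ?thesis .
  qed
  define h where "h e = (\<lambda>p. if p < n then nat (e p + N) else 0)" for e :: "nat \<Rightarrow> int"
  have shifted: "e p + N = int (h e p)" if "e \<in> E" "p < n" for e p
    using bound[OF that] that by (simp add: h_def)
  show "inj_on h E"
  proof (intro inj_onI ext)
    fix e e' p assume "e \<in> E" "e' \<in> E" "h e = h e'"
    show "e p = e' p"
    proof (cases "p < n")
      case True
      with shifted[OF \<open>e \<in> E\<close> True] shifted[OF \<open>e' \<in> E\<close> True] \<open>h e = h e'\<close>
      show ?thesis by simp
    next
      case False
      with supp \<open>e \<in> E\<close> \<open>e' \<in> E\<close> show ?thesis unfolding supported_def by (metis not_less)
    qed
  qed
  show "\<forall>e\<in>E. \<forall>i\<ge>n. h e i = 0" by (simp add: h_def)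
  show "\<forall>e\<in>E. laurent_monom n x e * laurent_monom n x (\<lambda>_. N) = (\<Prod>i<n. x i ^ h e i)"
  proof
    fix e assume "e \<in> E"
    have "laurent_monom n x e * laurent_monom n x (\<lambda>_. N) = (\<Prod>i<n. x i powi (e i + N))"
      by (subst laurent_monom_add[OF nz, symmetric]) (simp add: laurent_monom_def)
    also have "\<dots> = (\<Prod>i<n. x i ^ h e i)"
      by (rule prod.cong) (simp_all add: shifted[OF \<open>e \<in> E\<close>])
    finally show "laurent_monom n x e * laurent_monom n x (\<lambda>_. N) = (\<Prod>i<n. x i ^ h e i)" .
  qed
qed

lemma laurent_monoms_independent:
  assumes rf: "is_rat_fun_field n \<iota> x" and fin: "finite E" and supp: "\<forall>e\<in>E. supported n e"
    and vanish: "(\<Sum>e\<in>E. \<iota> (c e) * laurent_monom n x e) = 0"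
  shows "\<forall>e\<in>E. c e = 0"
proof -
  have nz: "\<forall>p<n. x p \<noteq> 0" using rat_fun_field_var_nonzero[OF rf] by blast
  obtain N h where inj: "inj_on h E" and h_supp: "\<forall>e\<in>E. \<forall>i\<ge>n. h e i = 0"
    and shift: "\<forall>e\<in>E. laurent_monom n x e * laurent_monom n x (\<lambda>_. N) = (\<Prod>i<n. x i ^ h e i)"
    by (rule laurent_monoms_shift[OF nz fin supp])
  have "0 = (\<Sum>e\<in>E. \<iota> (c e) * laurent_monom n x e) * laurent_monom n x (\<lambda>_. N)"
    using vanish by simp
  also have "\<dots> = (\<Sum>e\<in>E. \<iota> (c (inv_into E h (h e))) * (\<Prod>i<n. x i ^ h e i))"
    unfolding sum_distrib_right
    by (intro sum.cong refl) (simp add: inv_into_f_f[OF inj] shift mult.assoc)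
  also have "\<dots> = (\<Sum>m\<in>h ` E. \<iota> (c (inv_into E h m)) * (\<Prod>i<n. x i ^ m i))"
    by (rule sum.reindex[OF inj, symmetric, unfolded comp_def])
  finally have "\<forall>m\<in>h ` E. c (inv_into E h m) = 0"
    by (intro rat_fun_field_monomials_independent[OF rf]) (use fin h_supp in auto)
  then show ?thesis by (simp add: inv_into_f_f[OF inj])
qed

lemma lpoly_coeff_map_exps:
  assumes inj: "inj_on T {e. supported n e}" and "lpoly_supported n P" and "supported n e"
  shows "lpoly_coeff (lpoly_map_exps T P) (T e) = lpoly_coeff P e"
  using assms(2)
proof (induction P)
  case (Cons a P)
  obtain c e' where "a = (c, e')" by fastforce
  with Cons inj_onD[OF inj, of e' e] \<open>supported n e\<close> show ?case
    by (auto simp: lpoly_map_exps_def)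
qed (simp add: lpoly_map_exps_def)

lemma lpoly_eval_map_exps_eq_0_iff:
  assumes rf: "is_rat_fun_field n \<iota> x" and rf': "is_rat_fun_field n \<iota>' y"
    and T_supported: "\<And>e. supported n (T e)" and inj: "inj_on T {e. supported n e}"
    and P: "lpoly_supported n P"
  shows "lpoly_eval n \<iota>' y (lpoly_map_exps T P) = 0 \<longleftrightarrow> lpoly_eval n \<iota> x P = 0"
proof -
  have hom: "ring_hom_fun \<iota>" and hom': "ring_hom_fun \<iota>'" using rf rf' by (auto simp: rat_fun_field_hom)
  define E where "E = snd ` set P"
  have fin: "finite E" and E: "\<forall>e\<in>E. supported n e" using P by (auto simp: E_def lpoly_supported_def)
  have inj_E: "inj_on T E" using inj E by (auto intro: inj_on_subset)
  have coeff: "lpoly_coeff (lpoly_map_exps T P) (T e) = lpoly_coeff P e" if "e \<in> E" for e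
    using lpoly_coeff_map_exps[OF inj P] E that by blast
  have eval: "lpoly_eval n \<iota> x P = (\<Sum>e\<in>E. \<iota> (lpoly_coeff P e) * laurent_monom n x e)"
    by (rule lpoly_eval_regroup[OF hom fin]) (simp add: E_def)
  have "lpoly_eval n \<iota>' y (lpoly_map_exps T P) =
      (\<Sum>e'\<in>T ` E. \<iota>' (lpoly_coeff (lpoly_map_exps T P) e') * laurent_monom n y e')"
    by (rule lpoly_eval_regroup[OF hom']) (force simp: E_def lpoly_map_exps_def fin)+
  also have "\<dots> = (\<Sum>e\<in>E. \<iota>' (lpoly_coeff P e) * laurent_monom n y (T e))"
    by (simp add: sum.reindex[OF inj_E] coeff)
  finally have eval': "lpoly_eval n \<iota>' y (lpoly_map_exps T P) =
      (\<Sum>e\<in>E. \<iota>' (lpoly_coeff P e) * laurent_monom n y (T e))" .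
  have "lpoly_eval n \<iota>' y (lpoly_map_exps T P) = 0 \<longleftrightarrow> (\<forall>e\<in>E. lpoly_coeff P e = 0)"
  proof
    assume "lpoly_eval n \<iota>' y (lpoly_map_exps T P) = 0"
    then have "(\<Sum>e'\<in>T ` E. \<iota>' (lpoly_coeff P (inv_into E T e')) * laurent_monom n y e') = 0"
      by (simp add: eval' sum.reindex[OF inj_E] inv_into_f_f[OF inj_E])
    from laurent_monoms_independent[OF rf' finite_imageI[OF fin] _ this] T_supported
    show "\<forall>e\<in>E. lpoly_coeff P e = 0" by (auto simp: inv_into_f_f[OF inj_E])
  qed (simp add: eval' ring_hom_fun_zero[OF hom'])
  also have "\<dots> \<longleftrightarrow> lpoly_eval n \<iota> x P = 0"
    using laurent_monoms_independent[OF rf fin E] by (auto simp: eval ring_hom_fun_zero[OF hom])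
  finally show ?thesis .
qed

definition lpoly_const :: "'k \<Rightarrow> 'k laurent_poly" where
  "lpoly_const c = [(c, \<lambda>_. 0)]"

lemma lpoly_supported_const: "lpoly_supported n (lpoly_const c)"
  unfolding lpoly_const_def lpoly_supported_def supported_def by simp

lemma lpoly_eval_const: "ring_hom_fun \<iota> \<Longrightarrow> lpoly_eval n \<iota> x (lpoly_const c) = \<iota> c"
  by (simp add: lpoly_const_def ring_hom_fun_zero)

section \<open>Monomial substitutions\<close>

locale monomial_substitution =
  fixes n :: nat and \<iota> :: "'k::field \<Rightarrow> 'a::field" and x :: "nat \<Rightarrow> 'a"
    and \<iota>' :: "'k \<Rightarrow> 'b::field" and y :: "nat \<Rightarrow> 'b"
    and T :: "(nat \<Rightarrow> int) \<Rightarrow> (nat \<Rightarrow> int)"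
  assumes rf: "is_rat_fun_field n \<iota> x" and rf': "is_rat_fun_field n \<iota>' y"
    and T_supported: "\<And>e. supported n (T e)"
    and T_inj: "inj_on T {e. supported n e}"
    and T_add: "\<And>e f. T (\<lambda>i. e i + f i) = (\<lambda>i. T e i + T f i)"
    and T_hits_unit_vec: "\<And>j. j < n \<Longrightarrow> \<exists>e. supported n e \<and> T e = unit_vec j"
begin

lemma hom: "ring_hom_fun \<iota>" and hom': "ring_hom_fun \<iota>'"
  using rf rf' by (auto simp: rat_fun_field_hom)

lemma nonzero: "\<forall>p<n. x p \<noteq> 0" and nonzero': "\<forall>p<n. y p \<noteq> 0"
  using rat_fun_field_var_nonzero[OF rf] rat_fun_field_var_nonzero[OF rf'] by auto

abbreviation X :: "'k laurent_poly \<Rightarrow> 'a" where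
  "X \<equiv> lpoly_eval n \<iota> x"

abbreviation Y :: "'k laurent_poly \<Rightarrow> 'b" where
  "Y P \<equiv> lpoly_eval n \<iota>' y (lpoly_map_exps T P)"

lemma T_zero: "T (\<lambda>_. 0) = (\<lambda>_. 0)"
  using T_add[of "\<lambda>_. 0" "\<lambda>_. 0"] by (simp add: fun_eq_iff)

lemma Y_append: "Y (P @ Q) = Y P + Y Q"
  by (simp add: lpoly_map_exps_append lpoly_eval_append)

lemma X_mult: "X (lpoly_mult P Q) = X P * X Q"
  and Y_mult: "Y (lpoly_mult P Q) = Y P * Y Q"
  by (simp_all add: lpoly_map_exps_mult[OF T_add] lpoly_eval_mult hom hom' nonzero nonzero')

lemma X_uminus: "X (lpoly_uminus P) = - X P"
  and Y_uminus: "Y (lpoly_uminus P) = - Y P"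
  by (simp_all add: lpoly_map_exps_uminus lpoly_eval_uminus hom hom')

lemma X_const: "X (lpoly_const c) = \<iota> c"
  and Y_const: "Y (lpoly_const c) = \<iota>' c"
  by (simp_all add: lpoly_eval_const hom hom' lpoly_map_exps_def lpoly_const_def T_zero
      ring_hom_fun_zero)

lemma Y_eq_0_iff: "lpoly_supported n P \<Longrightarrow> Y P = 0 \<longleftrightarrow> X P = 0"
  by (rule lpoly_eval_map_exps_eq_0_iff[OF rf rf' T_supported T_inj])

definition represents :: "'a \<Rightarrow> 'k laurent_poly \<Rightarrow> 'k laurent_poly \<Rightarrow> bool" where
  "represents a P Q \<longleftrightarrow> lpoly_supported n P \<and> lpoly_supported n Q \<and> X Q \<noteq> 0 \<and> a = X P / X Q"

lemma represents_denom_nonzero: "represents a P Q \<Longrightarrow> Y Q \<noteq> 0"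
  unfolding represents_def using Y_eq_0_iff by blast

lemma represents_add:
  "represents a P Q \<Longrightarrow> represents b P' Q' \<Longrightarrow>
    represents (a + b) (lpoly_mult P Q' @ lpoly_mult P' Q) (lpoly_mult Q Q')"
  by (auto simp: represents_def lpoly_supported_append lpoly_supported_mult lpoly_eval_append
      X_mult field_simps)

lemma represents_mult:
  "represents a P Q \<Longrightarrow> represents b P' Q' \<Longrightarrow> represents (a * b) (lpoly_mult P P') (lpoly_mult Q Q')"
  by (auto simp: represents_def lpoly_supported_mult X_mult)

lemma represents_uminus: "represents a P Q \<Longrightarrow> represents (- a) (lpoly_uminus P) Q"
  by (auto simp: represents_def lpoly_supported_uminus X_uminus)

lemma represents_inverse: "represents a P Q \<Longrightarrow> a \<noteq> 0 \<Longrightarrow> represents (inverse a) Q P"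
  by (auto simp: represents_def)

lemma represents_const: "represents (\<iota> c) (lpoly_const c) (lpoly_const 1)"
  by (simp add: represents_def lpoly_supported_const X_const ring_hom_fun_one[OF hom])

lemma represents_laurent_monom:
  "supported n e \<Longrightarrow> represents (laurent_monom n x e) [(1, e)] (lpoly_const 1)"
  by (simp add: represents_def lpoly_supported_const X_const ring_hom_fun_one[OF hom])

lemma represents_exists: "\<exists>P Q. represents a P Q"
proof -
  let ?S = "{a. \<exists>P Q. represents a P Q}"
  have "subfield_set ?S"
  proof (rule subfield_setI)
    show "0 \<in> ?S" using represents_const[of 0] by (auto simp: ring_hom_fun_zero[OF hom])
    show "1 \<in> ?S" using represents_const[of 1] by (auto simp: ring_hom_fun_one[OF hom])
    show "a + b \<in> ?S" "a * b \<in> ?S" if "a \<in> ?S" "b \<in> ?S" for a b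
      using that represents_add represents_mult by blast+
    show "- a \<in> ?S" if "a \<in> ?S" for a
      using that represents_uminus by blast
    show "inverse a \<in> ?S" if "a \<in> ?S" for a
    proof (cases "a = 0")
      case False
      with that represents_inverse show ?thesis by blast
    qed (use \<open>0 \<in> ?S\<close> in simp)
  qed
  moreover have "range \<iota> \<subseteq> ?S"
    using represents_const by blast
  moreover have "x ` {..<n} \<subseteq> ?S"
  proof (clarsimp)
    fix i assume "i < n"
    then show "\<exists>P Q. represents (x i) P Q"
      using represents_laurent_monom[OF supported_unit_vec] laurent_monom_unit_vec by metis
  qed
  ultimately have "?S = UNIV" by (rule rat_fun_field_generated[OF rf])
  then show ?thesis by blast
qed

lemma represents_unique_image:
  assumes "represents a P Q" and "represents a P' Q'"
  shows "Y P / Y Q = Y P' / Y Q'"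
proof -
  let ?D = "lpoly_mult P Q' @ lpoly_uminus (lpoly_mult P' Q)"
  have "lpoly_supported n ?D"
    using assms by (auto simp: represents_def lpoly_supported_append lpoly_supported_uminus
        lpoly_supported_mult)
  moreover have "X ?D = 0"
    using assms by (auto simp: represents_def lpoly_eval_append X_mult X_uminus field_simps)
  ultimately have "Y ?D = 0" using Y_eq_0_iff by blast
  then have "Y P * Y Q' = Y P' * Y Q" by (simp add: Y_append Y_mult Y_uminus)
  then show ?thesis
    using represents_denom_nonzero[OF assms(1)] represents_denom_nonzero[OF assms(2)]
    by (simp add: field_simps)
qed

definition subst :: "'a \<Rightarrow> 'b" where
  "subst a = (SOME b. \<exists>P Q. represents a P Q \<and> b = Y P / Y Q)"

lemma subst_eq: "represents a P Q \<Longrightarrow> subst a = Y P / Y Q"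
  unfolding subst_def by (rule someI2_ex) (use represents_unique_image in blast)+

lemma subst_const: "subst (\<iota> c) = \<iota>' c"
  using subst_eq[OF represents_const[of c]] by (simp add: Y_const ring_hom_fun_one[OF hom'])

lemma ring_hom_fun_subst: "ring_hom_fun subst"
  unfolding ring_hom_fun_def
proof (intro conjI allI)
  show "subst 1 = 1"
    using subst_const[of 1] by (simp add: ring_hom_fun_one[OF hom] ring_hom_fun_one[OF hom'])
  fix a b
  obtain P Q P' Q' where r: "represents a P Q" "represents b P' Q'"
    using represents_exists by metis
  note eqs = subst_eq[OF r(1)] subst_eq[OF r(2)]
    represents_denom_nonzero[OF r(1)] represents_denom_nonzero[OF r(2)]
  show "subst (a + b) = subst a + subst b"
    using subst_eq[OF represents_add[OF r]] by (simp add: eqs Y_append Y_mult field_simps)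
  show "subst (a * b) = subst a * subst b"
    using subst_eq[OF represents_mult[OF r]] by (simp add: eqs Y_mult)
qed

lemma subst_laurent_monom: "supported n e \<Longrightarrow> subst (laurent_monom n x e) = laurent_monom n y (T e)"
  using subst_eq[OF represents_laurent_monom] by (simp add: Y_const ring_hom_fun_one[OF hom'])

lemma subst_var: "i < n \<Longrightarrow> subst (x i) = laurent_monom n y (T (unit_vec i))"
  using subst_laurent_monom[OF supported_unit_vec] by (simp add: laurent_monom_unit_vec)

lemma bij_subst: "bij subst"
proof (rule bijI)
  show "inj subst" by (rule ring_hom_fun_inj[OF ring_hom_fun_subst])
  have "range \<iota>' \<subseteq> range subst" by (metis image_subsetI rangeE rangeI subst_const)
  moreover have "y ` {..<n} \<subseteq> range subst"
  proof (clarsimp)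
    fix j assume "j < n"
    then obtain e where "supported n e" "T e = unit_vec j" using T_hits_unit_vec by blast
    with \<open>j < n\<close> have "subst (laurent_monom n x e) = y j"
      by (simp add: subst_laurent_monom laurent_monom_unit_vec)
    then show "y j \<in> range subst" by (metis rangeI)
  qed
  ultimately show "surj subst"
    by (rule rat_fun_field_generated[OF rf' subfield_set_range[OF ring_hom_fun_subst]])
qed

end

section \<open>Unimodular integer matrices\<close>

lemma sum_mult_delta:
  fixes k n :: nat
  assumes "k < n"
  shows "(\<Sum>j<n. f j * (if j = k then 1 else 0)) = (f k :: 'a::semiring_1)"
proof -
  have "(\<Sum>j<n. f j * (if j = k then 1 else 0)) = (\<Sum>j<n. if j = k then f j else 0)"
    by (rule sum.cong) auto
  also have "\<dots> = f k"
    using assms by simp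
  finally show ?thesis .
qed

definition mat_prod_is_id :: "nat \<Rightarrow> (nat \<Rightarrow> nat \<Rightarrow> int) \<Rightarrow> (nat \<Rightarrow> nat \<Rightarrow> int) \<Rightarrow> bool" where
  "mat_prod_is_id n A B \<longleftrightarrow> (\<forall>i<n. \<forall>j<n. (\<Sum>l<n. A i l * B l j) = (if i = j then 1 else 0))"

lemma GL_int_iff: "GL_int n A \<longleftrightarrow> (\<exists>B. mat_prod_is_id n A B \<and> mat_prod_is_id n B A)"
  by (simp add: GL_int_def mat_prod_is_id_def)

definition row_times_mat :: "nat \<Rightarrow> (nat \<Rightarrow> nat \<Rightarrow> int) \<Rightarrow> (nat \<Rightarrow> int) \<Rightarrow> nat \<Rightarrow> int" where
  "row_times_mat n B e = (\<lambda>p. if p < n then \<Sum>j<n. e j * B j p else 0)"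

lemma supported_row_times_mat: "supported n (row_times_mat n B e)"
  by (simp add: supported_def row_times_mat_def)

lemma row_times_mat_add:
  "row_times_mat n B (\<lambda>i. e i + f i) = (\<lambda>i. row_times_mat n B e i + row_times_mat n B f i)"
  by (auto simp: row_times_mat_def distrib_right sum.distrib)

lemma row_times_mat_unit_vec: "i < n \<Longrightarrow> p < n \<Longrightarrow> row_times_mat n B (unit_vec i) p = B i p"
  by (simp add: row_times_mat_def unit_vec_def mult.commute[of _ "B _ _"] sum_mult_delta)

lemma row_times_mat_inverse:
  assumes BA: "mat_prod_is_id n B A" and "supported n e"
  shows "row_times_mat n A (row_times_mat n B e) = e"
proof
  fix k
  show "row_times_mat n A (row_times_mat n B e) k = e k"
  proof (cases "k < n")
    case True
    have "(\<Sum>p<n. (\<Sum>j<n. e j * B j p) * A p k) = (\<Sum>p<n. \<Sum>j<n. e j * (B j p * A p k))"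
      by (simp add: sum_distrib_right mult.assoc)
    also have "\<dots> = (\<Sum>j<n. e j * (\<Sum>p<n. B j p * A p k))"
      by (subst sum.swap) (simp add: sum_distrib_left)
    also have "\<dots> = (\<Sum>j<n. e j * (if j = k then 1 else 0))"
      using BA True by (simp add: mat_prod_is_id_def)
    also have "\<dots> = e k" using True by (rule sum_mult_delta)
    finally show ?thesis using True by (simp add: row_times_mat_def cong: if_cong)
  next
    case False
    with \<open>supported n e\<close> show ?thesis by (simp add: row_times_mat_def supported_def)
  qed
qed

lemma monomial_substitution_row_times_mat:
  assumes "is_rat_fun_field n \<iota> x" "is_rat_fun_field n \<iota>' y"
    and "mat_prod_is_id n A B" "mat_prod_is_id n B A"
  shows "monomial_substitution n \<iota> x \<iota>' y (row_times_mat n B)"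
proof
  show "inj_on (row_times_mat n B) {e. supported n e}"
    by (rule inj_on_inverseI[where g = "row_times_mat n A"]) (simp add: row_times_mat_inverse assms)
  show "\<exists>e. supported n e \<and> row_times_mat n B e = unit_vec j" if "j < n" for j
    using row_times_mat_inverse[OF assms(3) supported_unit_vec[OF that]] supported_row_times_mat by blast
qed (use assms in \<open>simp_all add: supported_row_times_mat row_times_mat_add\<close>)

lemma mat_prod_is_id_contract:
  assumes BA: "mat_prod_is_id n B A" and "k < n"
  shows "(\<Sum>p<n. of_int (B k p) * (\<Sum>r<n. of_int (A p r) * g r)) = (g k :: 'k::comm_ring_1)"
proof -
  have "(\<Sum>p<n. of_int (B k p) * (\<Sum>r<n. of_int (A p r) * g r)) =
      (\<Sum>r<n. of_int (\<Sum>p<n. B k p * A p r) * g r)"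
    unfolding sum_distrib_left sum_distrib_right of_int_sum of_int_mult mult.assoc by (rule sum.swap)
  also have "\<dots> = (\<Sum>r<n. g r * (if r = k then 1 else 0))"
    using assms by (intro sum.cong refl) (simp add: mat_prod_is_id_def)
  also have "\<dots> = g k" using \<open>k < n\<close> by (rule sum_mult_delta)
  finally show ?thesis .
qed

lemma congr_mat_cancel:
  fixes L :: "nat \<Rightarrow> nat \<Rightarrow> 'k::field"
  assumes BA: "mat_prod_is_id n B A" and "i < n" "j < n"
  shows "(\<Sum>p<n. \<Sum>q<n. of_int (B i p) * congr_mat n A L p q * of_int (B j q)) = L i j"
proof -
  have inner: "(\<Sum>q<n. congr_mat n A L p q * of_int (B j q)) = (\<Sum>r<n. of_int (A p r) * L r j)" for p
  proof -
    have "(\<Sum>q<n. congr_mat n A L p q * of_int (B j q)) =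
        (\<Sum>r<n. of_int (A p r) * (\<Sum>q<n. of_int (B j q) * (\<Sum>s<n. of_int (A q s) * L r s)))"
      unfolding congr_mat_def sum_distrib_left sum_distrib_right
      by (subst sum.swap) (simp add: mult_ac)
    then show ?thesis by (simp add: mat_prod_is_id_contract[OF BA \<open>j < n\<close>])
  qed
  have "(\<Sum>p<n. \<Sum>q<n. of_int (B i p) * congr_mat n A L p q * of_int (B j q)) =
      (\<Sum>p<n. of_int (B i p) * (\<Sum>q<n. congr_mat n A L p q * of_int (B j q)))"
    by (simp add: sum_distrib_left mult.assoc)
  also have "\<dots> = L i j"
    by (simp add: inner mat_prod_is_id_contract[OF BA \<open>i < n\<close>])
  finally show ?thesis .
qed

theorem lemma5p1:
  fixes n :: nat
    and L M :: "nat \<Rightarrow> nat \<Rightarrow> 'k::field_char_0"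
    and A :: "nat \<Rightarrow> nat \<Rightarrow> int"
    and \<iota> :: "'k \<Rightarrow> 'a::field" and x :: "nat \<Rightarrow> 'a" and br :: "'a \<Rightarrow> 'a \<Rightarrow> 'a"
    and \<iota>' :: "'k \<Rightarrow> 'b::field" and y :: "nat \<Rightarrow> 'b" and br' :: "'b \<Rightarrow> 'b \<Rightarrow> 'b"
  assumes "antisym_mat n L" and "antisym_mat n M"
    and "GL_int n A"
    and "\<forall>i<n. \<forall>j<n. M i j = congr_mat n A L i j"
    and "is_k_lambda n L \<iota> x br"
    and "is_k_lambda n M \<iota>' y br'"
  shows "\<exists>f. poisson_iso \<iota> br \<iota>' br' f"
proof -
  obtain B where AB: "mat_prod_is_id n A B" and BA: "mat_prod_is_id n B A"
    using \<open>GL_int n A\<close> by (auto simp: GL_int_iff)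
  have rf: "is_rat_fun_field n \<iota> x" and pb: "poisson_bracket \<iota> br"
    and brx: "\<forall>i<n. \<forall>j<n. br (x i) (x j) = \<iota> (L i j) * x i * x j"
    and rf': "is_rat_fun_field n \<iota>' y" and pb': "poisson_bracket \<iota>' br'"
    and bry: "\<forall>i<n. \<forall>j<n. br' (y i) (y j) = \<iota>' (M i j) * y i * y j"
    using assms(5,6) unfolding is_k_lambda_def by blast+
  interpret monomial_substitution n \<iota> x \<iota>' y "row_times_mat n B"
    by (rule monomial_substitution_row_times_mat[OF rf rf' AB BA])
  have "subst (br (x i) (x j)) = br' (subst (x i)) (subst (x j))" if "i < n" "j < n" for i j
  proof -
    let ?m = "\<lambda>i. laurent_monom n y (row_times_mat n B (unit_vec i))"
    have "(\<Sum>p<n. \<Sum>q<n. of_int (row_times_mat n B (unit_vec i) p) * M p q *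
        of_int (row_times_mat n B (unit_vec j) q)) = L i j"
      using congr_mat_cancel[OF BA that] assms(4) that by (simp add: row_times_mat_unit_vec)
    then have "br' (subst (x i)) (subst (x j)) = \<iota>' (L i j) * ?m i * ?m j"
      using bracket_laurent_monom[OF hom' pb' nonzero' bry] that by (simp add: subst_var)
    also have "\<dots> = subst (br (x i) (x j))"
      using brx that by (simp add: subst_var subst_const ring_hom_fun_mult[OF ring_hom_fun_subst])
    finally show ?thesis by simp
  qed
  then show ?thesis
    using poisson_iso_from_generators[OF rf hom' pb pb' ring_hom_fun_subst bij_subst subst_const] by blast
qed

end
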